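(* For every positive integer $n$, the class $\mathcal K_n^*$ has the expansion property relative to the class $\mathcal K_n$.
   Context: Expansion property: let $L\subseteq L^*$ be relational languages, $\mathcal K$ a class of finite $L$-structures and $\mathcal K^*$ a class of finite $L^*$-structures whose $L$-reducts lie in $\mathcal K$. $\mathcal K^*$ has the expansion property relative to $\mathcal K$ if for every $\mathbf A\in\mathcal K$ there is $\mathbf B\in\mathcal K$ such that for all $\mathbf A^*,\mathbf B^*\in\mathcal K^*$ whose $L$-reducts are $\mathbf A$ and $\mathbf B$ respectively, $\mathbf A^*$ embeds into $\mathbf B^*$. A directed graph $(A,E)$ ($E$ irreflexive and asymmetric) is complete multipartite if the relation "$u=v$, or neither $E(u,v)$ nor $E(v,u)$" is an equivalence relation on $A$; its classes are called the parts. $\mathcal K_n$ is the class of finite complete multipartite directed graphs with at most $n$ parts (the age of the generic complete $n$-partite directed graph $n*I_\omega$). $\mathcal K_n^*$ is the class of finite structures $(A,E,P_0,\dots,P_{n-1},<)$ such that $(A,E)\in\mathcal K_n$, $P_0,\dots,P_{n-1}$ are pairwise disjoint subsets of $A$ each of which is either empty or a part, every part equals some $P_i$, and $<$ is a linear order on $A$ such that every element of $P_i$ is below every element of $P_j$ whenever $i<j$. *)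

theory Defs
  imports Main
begin

text \<open>Finite structures are represented on the carrier type nat (every finite structure
is isomorphic to one on nat, and all notions below are isomorphism invariant).
A digraph structure is (A, E) with E a set of pairs; an expanded structure is
(A, E, P, R) with P i the interpretation of the unary predicate P_i (only i < n
is used) and R the strict linear order.\<close>

type_synonym dg = "nat set \<times> (nat \<times> nat) set"
type_synonym odg = "nat set \<times> (nat \<times> nat) set \<times> (nat \<Rightarrow> nat set) \<times> (nat \<times> nat) set"

definition expansion_property ::
  "('s \<Rightarrow> bool) \<Rightarrow> ('t \<Rightarrow> bool) \<Rightarrow> ('t \<Rightarrow> 's) \<Rightarrow> ('t \<Rightarrow> 't \<Rightarrow> bool) \<Rightarrow> bool" where
  "expansion_property K Ks red emb \<longleftrightarrow>
     (\<forall>A. K A \<longrightarrow> (\<exists>B. K B \<and>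
        (\<forall>As Bs. Ks As \<longrightarrow> Ks Bs \<longrightarrow> red As = A \<longrightarrow> red Bs = B \<longrightarrow> emb As Bs)))"

definition nonadj :: "(nat \<times> nat) set \<Rightarrow> nat \<Rightarrow> nat \<Rightarrow> bool" where
  "nonadj E u v \<longleftrightarrow> u = v \<or> ((u, v) \<notin> E \<and> (v, u) \<notin> E)"

definition directed_graph :: "dg \<Rightarrow> bool" where
  "directed_graph G \<longleftrightarrow> (case G of (A, E) \<Rightarrow>
     E \<subseteq> A \<times> A \<and> (\<forall>x. (x, x) \<notin> E) \<and> (\<forall>x y. (x, y) \<in> E \<longrightarrow> (y, x) \<notin> E))"

definition complete_multipartite :: "dg \<Rightarrow> bool" where
  "complete_multipartite G \<longleftrightarrow> directed_graph G \<and>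
     (case G of (A, E) \<Rightarrow> equiv A {(u, v). u \<in> A \<and> v \<in> A \<and> nonadj E u v})"

definition parts :: "dg \<Rightarrow> nat set set" where
  "parts G = (case G of (A, E) \<Rightarrow> A // {(u, v). u \<in> A \<and> v \<in> A \<and> nonadj E u v})"

definition K :: "nat \<Rightarrow> dg \<Rightarrow> bool" where
  "K n G \<longleftrightarrow> finite (fst G) \<and> complete_multipartite G \<and> card (parts G) \<le> n"

definition reduct :: "odg \<Rightarrow> dg" where
  "reduct S = (case S of (A, E, P, R) \<Rightarrow> (A, E))"

definition Kstar :: "nat \<Rightarrow> odg \<Rightarrow> bool" where
  "Kstar n S \<longleftrightarrow> (case S of (A, E, P, R) \<Rightarrow>
     K n (A, E) \<and>
     (\<forall>i<n. P i \<subseteq> A) \<and>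
     (\<forall>i<n. \<forall>j<n. i \<noteq> j \<longrightarrow> P i \<inter> P j = {}) \<and>
     (\<forall>i<n. P i = {} \<or> P i \<in> parts (A, E)) \<and>
     (\<forall>X \<in> parts (A, E). \<exists>i<n. X = P i) \<and>
     R \<subseteq> A \<times> A \<and> strict_linear_order_on A R \<and>
     (\<forall>i<n. \<forall>j<n. i < j \<longrightarrow> (\<forall>x \<in> P i. \<forall>y \<in> P j. (x, y) \<in> R)))"

definition embeds :: "nat \<Rightarrow> odg \<Rightarrow> odg \<Rightarrow> bool" where
  "embeds n S T \<longleftrightarrow> (case S of (A, E, P, R) \<Rightarrow> case T of (B, F, Q, U) \<Rightarrow>
     (\<exists>f. inj_on f A \<and> f ` A \<subseteq> B \<and>
       (\<forall>x\<in>A. \<forall>y\<in>A. ((x, y) \<in> E \<longleftrightarrow> (f x, f y) \<in> F)) \<and>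
       (\<forall>x\<in>A. \<forall>y\<in>A. ((x, y) \<in> R \<longleftrightarrow> (f x, f y) \<in> U)) \<and>
       (\<forall>i<n. \<forall>x\<in>A. (x \<in> P i \<longleftrightarrow> f x \<in> Q i))))"

end

theory Submission
  imports Defs "HOL-Library.Ramsey" "HOL-Library.Nat_Bijection"
begin

text \<open>
  Let \<open>A \<subseteq> {..<m}\<close> and \<open>r = 2 m\<^sup>2\<close>. The witness graph has a vertex \<open>(j, S)\<close> for every part
  index \<open>j < n\<close> and every \<open>r\<close>-subset \<open>S\<close> of a large \<open>{..<N}\<close>; for \<open>j < j'\<close> the edge between
  \<open>(j, S)\<close> and \<open>(j', T)\<close> points forward iff \<open>S\<close> and \<open>T\<close> are discordant, i.e. the comparison
  of their increasing enumerations changes between positions \<open>2q\<close> and \<open>2q + 1\<close> for some \<open>q\<close>.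

  Given expansions of both graphs, Ramsey's theorem yields a large \<open>H\<close> on which, inside each
  part, the order of the expansion between two interleaved \<open>r\<close>-subsets does not depend on the
  subsets. A vertex \<open>z\<close> of \<open>A\<close> goes to the part carrying its label, to the \<open>r\<close>-subset of \<open>H\<close>
  whose \<open>c\<close>-th element is taken from the \<open>c\<close>-th block of \<open>H\<close> at the position given by a key of
  \<open>z\<close>. Within a part the keys increase along the order of \<open>A\<close> (or its converse), so codes
  interleave and the order is reproduced. Coordinates \<open>2q\<close> and \<open>2q + 1\<close> are devoted to one
  pair of vertices: their keys agree except that the odd one swaps that pair when the edge
  between them has to be reversed, so two codes are discordant exactly when required.
\<close>

section \<open>Parts of expanded structures\<close>

definition part_index :: "nat \<Rightarrow> (nat \<Rightarrow> nat set) \<Rightarrow> nat \<Rightarrow> nat" where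
  "part_index n P z = (THE i. i < n \<and> z \<in> P i)"

lemma KstarD:
  assumes "Kstar n (A, E, P, R)"
  shows Kstar_K: "K n (A, E)"
    and Kstar_disjoint: "\<And>i j. i < n \<Longrightarrow> j < n \<Longrightarrow> x \<in> P i \<Longrightarrow> x \<in> P j \<Longrightarrow> i = j"
    and Kstar_parts_labelled: "\<And>X. X \<in> parts (A, E) \<Longrightarrow> \<exists>i<n. X = P i"
    and Kstar_order_on: "strict_linear_order_on A R"
    and Kstar_order_labels:
      "\<And>i j x y. i < j \<Longrightarrow> j < n \<Longrightarrow> x \<in> P i \<Longrightarrow> y \<in> P j \<Longrightarrow> (x, y) \<in> R"
proof -
  show "K n (A, E)" "strict_linear_order_on A R"
    using assms by (simp_all add: Kstar_def)
  have "\<forall>i<n. \<forall>j<n. i \<noteq> j \<longrightarrow> P i \<inter> P j = {}"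
    and "\<forall>X \<in> parts (A, E). \<exists>i<n. X = P i"
    and "\<forall>i<n. \<forall>j<n. i < j \<longrightarrow> (\<forall>x \<in> P i. \<forall>y \<in> P j. (x, y) \<in> R)"
    using assms by (simp_all add: Kstar_def)
  then show "\<And>i j. i < n \<Longrightarrow> j < n \<Longrightarrow> x \<in> P i \<Longrightarrow> x \<in> P j \<Longrightarrow> i = j"
    and "\<And>X. X \<in> parts (A, E) \<Longrightarrow> \<exists>i<n. X = P i"
    and "\<And>i j x y. i < j \<Longrightarrow> j < n \<Longrightarrow> x \<in> P i \<Longrightarrow> y \<in> P j \<Longrightarrow> (x, y) \<in> R"
    by (blast, blast, meson less_trans)
qed

lemma Kstar_finite: "Kstar n (A, E, P, R) \<Longrightarrow> finite A"
  using Kstar_K K_def by auto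

lemma Kstar_part_classes:
  assumes "Kstar n (A, E, P, R)" "z \<in> A"
  shows "\<exists>i<n. z \<in> P i \<and> (\<forall>y\<in>A. y \<in> P i \<longleftrightarrow> nonadj E z y)"
proof -
  define rel where "rel = {(u, v). u \<in> A \<and> v \<in> A \<and> nonadj E u v}"
  have "equiv A rel"
    using Kstar_K[OF assms(1)] by (simp add: K_def complete_multipartite_def rel_def)
  have "\<forall>X \<in> A // rel. \<exists>i<n. X = P i"
    using Kstar_parts_labelled[OF assms(1)] by (simp add: parts_def rel_def)
  moreover have "rel `` {z} \<in> A // rel"
    using assms(2) by (simp add: quotientI)
  ultimately obtain i where "i < n" "P i = rel `` {z}"
    by metis
  moreover have "z \<in> rel `` {z}"
    using \<open>equiv A rel\<close> assms(2) by (auto simp: equiv_def refl_on_def)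
  ultimately show ?thesis
    by (auto simp: rel_def)
qed

lemma Kstar_part_index:
  assumes "Kstar n (A, E, P, R)" "z \<in> A"
  shows part_index_less: "part_index n P z < n"
    and mem_part_iff: "i < n \<Longrightarrow> z \<in> P i \<longleftrightarrow> part_index n P z = i"
    and nonadj_iff_same_part:
      "y \<in> A \<Longrightarrow> nonadj E z y \<longleftrightarrow> part_index n P z = part_index n P y"
proof -
  note disjoint = Kstar_disjoint[OF assms(1)]
  have index: "part_index n P x = i" if "i < n" "x \<in> P i" for i x
    unfolding part_index_def using disjoint that by blast
  obtain i where i: "i < n" "z \<in> P i" and cls: "\<forall>y\<in>A. y \<in> P i \<longleftrightarrow> nonadj E z y"
    using Kstar_part_classes[OF assms] by blast
  show "part_index n P z < n" "i' < n \<Longrightarrow> z \<in> P i' \<longleftrightarrow> part_index n P z = i'" for i'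
    using index[OF i] i disjoint by auto
  show "nonadj E z y \<longleftrightarrow> part_index n P z = part_index n P y" if y: "y \<in> A"
  proof -
    obtain i' where "i' < n" "y \<in> P i'"
      using Kstar_part_classes[OF assms(1) y] by blast
    then have "part_index n P y = i'"
      by (rule index)
    then show ?thesis
      using cls y index[OF i] \<open>i' < n\<close> \<open>y \<in> P i'\<close> disjoint[OF i(1) \<open>i' < n\<close>] by auto
  qed
qed

lemma Kstar_edges:
  assumes "Kstar n (A, E, P, R)" "x \<in> A" "y \<in> A"
  shows Kstar_no_edge_in_part: "part_index n P x = part_index n P y \<Longrightarrow> (x, y) \<notin> E"
    and Kstar_edge_across_parts:
      "part_index n P x \<noteq> part_index n P y \<Longrightarrow> (x, y) \<in> E \<longleftrightarrow> (y, x) \<notin> E"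
proof -
  have "(x, x) \<notin> E" "(x, y) \<in> E \<Longrightarrow> (y, x) \<notin> E"
    using Kstar_K[OF assms(1)] by (auto simp: K_def complete_multipartite_def directed_graph_def)
  then show "part_index n P x = part_index n P y \<Longrightarrow> (x, y) \<notin> E"
    "part_index n P x \<noteq> part_index n P y \<Longrightarrow> (x, y) \<in> E \<longleftrightarrow> (y, x) \<notin> E"
    using nonadj_iff_same_part[OF assms] by (auto simp: nonadj_def)
qed

lemma Kstar_order:
  assumes "Kstar n (A, E, P, R)"
  shows Kstar_order_irrefl: "(x, x) \<notin> R"
    and Kstar_order_trans: "(x, y) \<in> R \<Longrightarrow> (y, z) \<in> R \<Longrightarrow> (x, z) \<in> R"
    and Kstar_order_total: "x \<in> A \<Longrightarrow> y \<in> A \<Longrightarrow> x \<noteq> y \<Longrightarrow> (x, y) \<in> R \<or> (y, x) \<in> R"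
  using Kstar_order_on[OF assms]
  unfolding strict_linear_order_on_def irrefl_on_def total_on_def trans_def by blast+

lemma Kstar_order_across_parts:
  assumes "Kstar n (A, E, P, R)" "x \<in> A" "y \<in> A" "part_index n P x \<noteq> part_index n P y"
  shows "(x, y) \<in> R \<longleftrightarrow> part_index n P x < part_index n P y"
proof -
  have ordered: "(u, v) \<in> R" if "u \<in> A" "v \<in> A" "part_index n P u < part_index n P v" for u v
    using Kstar_order_labels[OF assms(1) that(3)] part_index_less[OF assms(1)]
      mem_part_iff[OF assms(1)]
      that by blast
  show ?thesis
  proof (cases "part_index n P x < part_index n P y")
    case False
    then have "(y, x) \<in> R"
      using ordered assms(2-4) by simp
    then show ?thesis
      using False Kstar_order_irrefl[OF assms(1)] Kstar_order_trans[OF assms(1)] by blast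
  qed (use ordered assms(2,3) in simp)
qed

lemma K_of_part_function:
  assumes "finite A" "E \<subseteq> A \<times> A" "\<pi> ` A \<subseteq> {..<n}"
    and no_edge: "\<And>x y. x \<in> A \<Longrightarrow> y \<in> A \<Longrightarrow> \<pi> x = \<pi> y \<Longrightarrow> (x, y) \<notin> E"
    and tournament: "\<And>x y. x \<in> A \<Longrightarrow> y \<in> A \<Longrightarrow> \<pi> x \<noteq> \<pi> y \<Longrightarrow> (x, y) \<in> E \<longleftrightarrow> (y, x) \<notin> E"
  shows "K n (A, E)"
proof -
  define rel where "rel = {(u, v). u \<in> A \<and> v \<in> A \<and> nonadj E u v}"
  have "nonadj E u v \<longleftrightarrow> \<pi> u = \<pi> v" if "u \<in> A" "v \<in> A" for u v
    using no_edge[OF that] no_edge[OF that(2,1)] tournament[OF that] by (auto simp: nonadj_def)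
  then have rel: "rel = {(u, v). u \<in> A \<and> v \<in> A \<and> \<pi> u = \<pi> v}"
    unfolding rel_def by auto
  have "A // rel \<subseteq> (\<lambda>i. {x \<in> A. \<pi> x = i}) ` {..<n}"
  proof
    fix X assume "X \<in> A // rel"
    then obtain x where x: "x \<in> A" "X = {y \<in> A. \<pi> x = \<pi> y}"
      unfolding rel by (auto elim!: quotientE)
    then have "X = {y \<in> A. \<pi> y = \<pi> x}"
      by auto
    moreover have "\<pi> x \<in> {..<n}"
      using assms(3) x(1) by blast
    ultimately show "X \<in> (\<lambda>i. {x \<in> A. \<pi> x = i}) ` {..<n}"
      by (intro image_eqI[where x = "\<pi> x"]) simp_all
  qed
  then have "card (A // rel) \<le> card ((\<lambda>i. {x \<in> A. \<pi> x = i}) ` {..<n})"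
    by (intro card_mono) simp_all
  also have "\<dots> \<le> n"
    using card_image_le[of "{..<n}"] by simp
  finally have "card (A // rel) \<le> n" .
  moreover have "equiv A rel"
    unfolding rel by (rule equivI) (auto simp: refl_on_def sym_def trans_def)
  moreover have "directed_graph (A, E)"
    unfolding directed_graph_def using assms(2) no_edge tournament by blast
  ultimately show ?thesis
    using assms(1) by (simp add: K_def complete_multipartite_def parts_def rel_def)
qed

section \<open>Ranks and block codes\<close>

definition rank_in :: "'a set \<Rightarrow> ('a \<times> 'a) set \<Rightarrow> 'a \<Rightarrow> nat" where
  "rank_in A R x = card {y \<in> A. (y, x) \<in> R}"

lemma rank_in_less:
  assumes "finite A" "trans R" "irrefl R" "(x, y) \<in> R" "x \<in> A"
  shows "rank_in A R x < rank_in A R y"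
  unfolding rank_in_def
proof (rule psubset_card_mono)
  show "{z \<in> A. (z, x) \<in> R} \<subset> {z \<in> A. (z, y) \<in> R}"
    using assms(2-5) by (auto simp: irrefl_def dest: transD)
qed (use assms(1) in simp)

lemma rank_in_less_card:
  assumes "finite A" "irrefl R" "x \<in> A"
  shows "rank_in A R x < card A"
  unfolding rank_in_def
  using assms by (intro psubset_card_mono) (auto simp: irrefl_def)

lemma sorted_list_of_set_strict_mono_image:
  assumes "strict_mono_on {..<k} g"
  shows "sorted_list_of_set (g ` {..<k}) = map g [0..<k]"
proof -
  have "sorted_wrt (<) (map g [0..<k])"
    using assms by (auto simp: sorted_wrt_map sorted_wrt_iff_nth_less strict_mono_on_def)
  moreover have "length (map g [0..<k]) = card (g ` {..<k})"
    using card_image[OF strict_mono_on_imp_inj_on[OF assms]] by simp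
  ultimately show ?thesis
    using sorted_list_of_set_unique[of "g ` {..<k}" "map g [0..<k]"]
    by (simp add: atLeast0LessThan)
qed

definition block_code :: "(nat \<Rightarrow> nat) \<Rightarrow> nat \<Rightarrow> nat \<Rightarrow> (nat \<Rightarrow> nat) \<Rightarrow> nat set" where
  "block_code h w r g = (\<lambda>c. h (c * w + g c)) ` {..<r}"

definition alternate_elems :: "nat \<Rightarrow> nat set \<Rightarrow> nat set" where
  "alternate_elems i Z = (\<lambda>c. sorted_list_of_set Z ! (2 * c + i)) ` {..<card Z div 2}"

definition discordant :: "nat \<Rightarrow> nat set \<Rightarrow> nat set \<Rightarrow> bool" where
  "discordant r S T \<longleftrightarrow> (\<exists>q. 2 * q + 1 < r \<and>
     (sorted_list_of_set S ! (2 * q) < sorted_list_of_set T ! (2 * q)) \<noteq>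
     (sorted_list_of_set S ! (2 * q + 1) < sorted_list_of_set T ! (2 * q + 1)))"

lemma block_index_less:
  fixes a b c c' w :: nat
  assumes "a < w" "c < c'"
  shows "c * w + a < c' * w + b"
proof -
  have "c * w + a < Suc c * w"
    using assms(1) by simp
  also have "\<dots> \<le> c' * w"
    using assms(2) by (intro mult_le_mono1) simp
  finally show ?thesis
    by simp
qed

lemma block_index_bound:
  fixes g :: "nat \<Rightarrow> nat"
  assumes "g c < w" "c < r"
  shows "c * w + g c < r * w"
  using block_index_less[OF assms, of 0] by simp

lemma interleaved_index:
  fixes g1 g2 :: "nat \<Rightarrow> nat"
  assumes "\<forall>c<r. g1 c < g2 c" "\<forall>c<r. g2 c < w"
  defines "\<psi> \<equiv> \<lambda>t. t div 2 * w + (if even t then g1 else g2) (t div 2)"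
  shows "strict_mono_on {..<2 * r} \<psi>" and "t < 2 * r \<Longrightarrow> \<psi> t < r * w"
proof -
  have bound: "(if even t then g1 else g2) (t div 2) < w" if "t < 2 * r" for t
  proof -
    have "t div 2 < r"
      using that by simp
    then have "g1 (t div 2) < w" "g2 (t div 2) < w"
      using assms(1,2) less_trans by blast+
    then show ?thesis
      by simp
  qed
  show "\<psi> t < r * w" if "t < 2 * r"
    unfolding \<psi>_def using bound[OF that] that by (intro block_index_bound) simp_all
  show "strict_mono_on {..<2 * r} \<psi>"
  proof (rule strict_mono_onI)
    fix t t' assume t: "t \<in> {..<2 * r}" "t' \<in> {..<2 * r}" "t < t'"
    show "\<psi> t < \<psi> t'"
    proof (cases "t div 2 = t' div 2")
      case True
      then have "even t" "odd t'"
        using t(3) by presburger+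
      then show ?thesis
        using True t assms by (simp add: \<psi>_def)
    next
      case False
      then have "t div 2 < t' div 2"
        using t(3) by (simp add: div_le_mono order_less_le)
      with bound[of t] t(1) show ?thesis
        unfolding \<psi>_def by (intro block_index_less) simp_all
    qed
  qed
qed

context
  fixes h :: "nat \<Rightarrow> nat" and w r :: nat
  assumes h_mono: "strict_mono_on {..<r * w} h"
begin

lemma sorted_block_code:
  assumes "\<forall>c<r. g c < w"
  shows "sorted_list_of_set (block_code h w r g) = map (\<lambda>c. h (c * w + g c)) [0..<r]"
proof -
  have "strict_mono_on {..<r} (\<lambda>c. h (c * w + g c))"
  proof (rule strict_mono_onI)
    fix c c' assume "c \<in> {..<r}" "c' \<in> {..<r}" "c < c'"
    then show "h (c * w + g c) < h (c' * w + g c')"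
      using assms block_index_bound[of g _ w r] block_index_less[of "g c" w c c' "g c'"]
        strict_mono_onD[OF h_mono] by simp
  qed
  then show ?thesis
    unfolding block_code_def by (rule sorted_list_of_set_strict_mono_image)
qed

lemma card_block_code:
  assumes "\<forall>c<r. g c < w"
  shows "card (block_code h w r g) = r"
  using arg_cong[OF sorted_block_code[OF assms], of length] by simp

lemma block_code_subset:
  assumes "\<forall>c<r. g c < w"
  shows "block_code h w r g \<subseteq> h ` {..<r * w}"
  using assms block_index_bound[of g _ w r] by (auto simp: block_code_def)

lemma discordant_block_code:
  assumes "\<forall>c<r. g1 c < w" "\<forall>c<r. g2 c < w"
  shows "discordant r (block_code h w r g1) (block_code h w r g2) \<longleftrightarrow>
    (\<exists>q. 2 * q + 1 < r \<and> (g1 (2 * q) < g2 (2 * q)) \<noteq> (g1 (2 * q + 1) < g2 (2 * q + 1)))"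
proof -
  let ?code = "\<lambda>g. map (\<lambda>c. h (c * w + g c)) [0..<r]"
  have nth_less: "?code g1 ! c < ?code g2 ! c \<longleftrightarrow> g1 c < g2 c" if "c < r" for c
    using strict_mono_on_less[OF h_mono] block_index_bound[of g1 c w r]
      block_index_bound[of g2 c w r]
      assms that by simp
  show ?thesis
    unfolding discordant_def sorted_block_code[OF assms(1)] sorted_block_code[OF assms(2)]
  proof (intro ex_cong1 conj_cong refl)
    fix q assume "2 * q + 1 < r"
    then show "(?code g1 ! (2 * q) < ?code g2 ! (2 * q)) \<noteq>
        (?code g1 ! (2 * q + 1) < ?code g2 ! (2 * q + 1))
      \<longleftrightarrow> (g1 (2 * q) < g2 (2 * q)) \<noteq> (g1 (2 * q + 1) < g2 (2 * q + 1))"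
      using nth_less[of "2 * q"] nth_less[of "2 * q + 1"] by simp
  qed
qed

lemma block_codes_interleave:
  assumes "\<forall>c<r. g1 c < g2 c" "\<forall>c<r. g2 c < w"
  obtains Z where "Z \<subseteq> h ` {..<r * w}" "card Z = 2 * r"
    "alternate_elems 0 Z = block_code h w r g1" "alternate_elems 1 Z = block_code h w r g2"
proof
  define \<psi> where "\<psi> t = t div 2 * w + (if even t then g1 else g2) (t div 2)" for t
  note \<psi>_mono = interleaved_index(1)[OF assms, folded \<psi>_def]
    and \<psi>_bound = interleaved_index(2)[OF assms, folded \<psi>_def]
  have mono: "strict_mono_on {..<2 * r} (h \<circ> \<psi>)"
    using \<psi>_bound strict_mono_onD[OF h_mono] strict_mono_onD[OF \<psi>_mono]
    by (auto intro!: strict_mono_onI)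
  define Z where "Z = (h \<circ> \<psi>) ` {..<2 * r}"
  have sorted: "sorted_list_of_set Z = map (h \<circ> \<psi>) [0..<2 * r]"
    unfolding Z_def using mono by (rule sorted_list_of_set_strict_mono_image)
  show card: "card Z = 2 * r"
    unfolding Z_def using card_image[OF strict_mono_on_imp_inj_on[OF mono]] by simp
  show "Z \<subseteq> h ` {..<r * w}"
    using \<psi>_bound by (auto simp: Z_def)
  show "alternate_elems 0 Z = block_code h w r g1" "alternate_elems 1 Z = block_code h w r g2"
    unfolding alternate_elems_def block_code_def card sorted
    by (auto simp: \<psi>_def intro!: image_cong)
qed

end

section \<open>Keys separating one pair\<close>

locale part_keys =
  fixes A :: "nat set" and p \<kappa> :: "nat \<Rightarrow> nat" and m :: nat
  assumes A_bound: "A \<subseteq> {..<m}"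
    and key_bound: "\<And>z. z \<in> A \<Longrightarrow> \<kappa> z < m"
begin

text \<open>The keys of \<open>x\<close> and \<open>y\<close> are \<open>2m\<close> and \<open>2m + 1\<close>, exchanged by \<open>sw\<close>; every other vertex
  gets a key below \<open>2m\<close> if it lies below \<open>x\<close> or \<open>y\<close> in their parts and above \<open>2m + 1\<close>
  otherwise, so only the relative order of \<open>x\<close> and \<open>y\<close> depends on \<open>sw\<close>.\<close>

definition swap_key :: "nat \<Rightarrow> nat \<Rightarrow> bool \<Rightarrow> nat \<Rightarrow> nat" where
  "swap_key x y sw z =
    (if z = x then 2 * m + (if sw then 1 else 0)
     else if z = y then 2 * m + (if sw then 0 else 1)
     else if (p z = p x \<and> \<kappa> z < \<kappa> x) \<or> (p z = p y \<and> \<kappa> z < \<kappa> y) then m + \<kappa> z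
     else 2 * m + 2 + \<kappa> z)"

lemma swap_key_less: "z \<in> A \<Longrightarrow> swap_key x y sw z < 3 * m + 2"
  using key_bound[of z] by (simp add: swap_key_def)

lemma swap_key_mono:
  assumes "p x \<noteq> p y" "z \<in> A" "z' \<in> A" "p z = p z'" "\<kappa> z < \<kappa> z'"
  shows "swap_key x y sw z < swap_key x y sw z'"
  using assms key_bound[of z] key_bound[of z'] by (auto simp: swap_key_def)

lemma swap_key_swap:
  assumes "p x \<noteq> p y" "u \<in> A" "v \<in> A"
  shows "(swap_key x y False u < swap_key x y False v) \<noteq> (swap_key x y True u < swap_key x y True v)
    \<longleftrightarrow> (u = x \<and> v = y) \<or> (u = y \<and> v = x)"
  using assms key_bound[of u] key_bound[of v] by (auto simp: swap_key_def)

text \<open>Coordinates \<open>2q\<close> and \<open>2q + 1\<close> serve the pair \<open>(q div m, q mod m)\<close>.\<close>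

definition pair_key :: "(nat \<Rightarrow> nat \<Rightarrow> bool) \<Rightarrow> nat \<Rightarrow> nat \<Rightarrow> nat" where
  "pair_key fl c =
    (let x = c div 2 div m; y = c div 2 mod m in
     if x \<in> A \<and> y \<in> A \<and> p x \<noteq> p y then swap_key x y (odd c \<and> fl x y) else \<kappa>)"

lemma pair_key_less: "z \<in> A \<Longrightarrow> pair_key fl c z < 3 * m + 2"
  using key_bound[of z] swap_key_less[of z] by (simp add: pair_key_def Let_def)

lemma pair_key_mono:
  assumes "z \<in> A" "z' \<in> A" "p z = p z'" "\<kappa> z < \<kappa> z'"
  shows "pair_key fl c z < pair_key fl c z'"
  using assms swap_key_mono by (simp add: pair_key_def Let_def)

lemma pair_key_even: "pair_key fl (2 * q) =
    (if q div m \<in> A \<and> q mod m \<in> A \<and> p (q div m) \<noteq> p (q mod m)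
     then swap_key (q div m) (q mod m) False else \<kappa>)"
  by (simp add: pair_key_def Let_def)

lemma pair_key_odd: "pair_key fl (2 * q + 1) =
    (if q div m \<in> A \<and> q mod m \<in> A \<and> p (q div m) \<noteq> p (q mod m)
     then swap_key (q div m) (q mod m) (fl (q div m) (q mod m)) else \<kappa>)"
  by (simp add: pair_key_def Let_def)

lemma pair_key_discordant:
  assumes "u \<in> A" "v \<in> A"
  shows "(\<exists>q. 2 * q + 1 < 2 * m * m \<and>
      (pair_key fl (2 * q) u < pair_key fl (2 * q) v) \<noteq>
      (pair_key fl (2 * q + 1) u < pair_key fl (2 * q + 1) v))
    \<longleftrightarrow> p u \<noteq> p v \<and> (fl u v \<or> fl v u)"
    (is "(\<exists>q. ?D q) \<longleftrightarrow> _")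
proof
  assume "\<exists>q. ?D q"
  then obtain q where D: "?D q"
    by blast
  define x y where "x = q div m" and "y = q mod m"
  note D' = D[unfolded pair_key_even pair_key_odd x_def[symmetric] y_def[symmetric]]
  have cross: "x \<in> A \<and> y \<in> A \<and> p x \<noteq> p y"
    using D' by (auto split: if_splits)
  have "fl x y"
  proof (rule ccontr)
    assume "\<not> fl x y"
    then show False
      using D' cross by simp
  qed
  then have "(u = x \<and> v = y) \<or> (u = y \<and> v = x)"
    using D' cross swap_key_swap[OF _ assms, of x y] by simp
  then show "p u \<noteq> p v \<and> (fl u v \<or> fl v u)"
    using cross \<open>fl x y\<close> by auto
next
  have pair: "?D (x * m + y)" if "x \<in> A" "y \<in> A" "p x \<noteq> p y" "fl x y"
    and "(u = x \<and> v = y) \<or> (u = y \<and> v = x)" for x y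
  proof -
    have "x < m" "y < m"
      using that(1,2) A_bound by auto
    then have "x * m + y < m * m" "(x * m + y) div m = x" "(x * m + y) mod m = y"
      using block_index_less[of y m x m 0] by auto
    then show ?thesis
      unfolding pair_key_even pair_key_odd using swap_key_swap[OF that(3) assms] that by simp
  qed
  assume "p u \<noteq> p v \<and> (fl u v \<or> fl v u)"
  then have "?D (u * m + v) \<or> ?D (v * m + u)"
    using pair[of u v] pair[of v u] assms by auto
  then show "\<exists>q. ?D q"
    by blast
qed

end

section \<open>The code graph\<close>

definition code_vertex :: "nat \<times> nat set \<Rightarrow> nat" where
  "code_vertex v = prod_encode (fst v, set_encode (snd v))"

lemma code_vertex_eq_iff:
  assumes "finite (snd u)" "finite (snd v)"
  shows "code_vertex u = code_vertex v \<longleftrightarrow> u = v"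
  using assms by (simp add: code_vertex_def set_encode_eq prod_eq_iff)

lemma code_vertex_index: "fst (prod_decode (code_vertex v)) = fst v"
  by (simp add: code_vertex_def)

definition code_edge :: "nat \<Rightarrow> nat \<times> nat set \<Rightarrow> nat \<times> nat set \<Rightarrow> bool" where
  "code_edge r u v \<longleftrightarrow>
    (fst u < fst v \<and> discordant r (snd u) (snd v)) \<or>
    (fst v < fst u \<and> \<not> discordant r (snd v) (snd u))"

definition code_graph :: "nat \<Rightarrow> nat \<Rightarrow> nat \<Rightarrow> dg" where
  "code_graph n N r =
    (code_vertex ` ({..<n} \<times> nsets {..<N} r),
     {(code_vertex u, code_vertex v) | u v.
        u \<in> {..<n} \<times> nsets {..<N} r \<and> v \<in> {..<n} \<times> nsets {..<N} r \<and> code_edge r u v})"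

lemma code_graph_edge_iff:
  assumes "u \<in> {..<n} \<times> nsets {..<N} r" "v \<in> {..<n} \<times> nsets {..<N} r"
  shows "(code_vertex u, code_vertex v) \<in> snd (code_graph n N r) \<longleftrightarrow> code_edge r u v"
proof -
  have inj: "inj_on code_vertex ({..<n} \<times> nsets {..<N} r)"
    by (rule inj_onI) (use code_vertex_eq_iff in \<open>force simp: nsets_def\<close>)
  show ?thesis
  proof
    assume "(code_vertex u, code_vertex v) \<in> snd (code_graph n N r)"
    then obtain u' v' where "code_vertex u = code_vertex u'" "code_vertex v = code_vertex v'"
      "u' \<in> {..<n} \<times> nsets {..<N} r" "v' \<in> {..<n} \<times> nsets {..<N} r" "code_edge r u' v'"
      by (auto simp: code_graph_def)
    moreover from this have "u = u'" "v = v'"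
      using inj_onD[OF inj] assms by blast+
    ultimately show "code_edge r u v"
      by simp
  qed (use assms in \<open>auto simp: code_graph_def\<close>)
qed

lemma code_graph_K: "K n (code_graph n N r)"
proof -
  let ?V = "{..<n} \<times> nsets {..<N} r"
  obtain B F where BF: "code_graph n N r = (B, F)"
    by (cases "code_graph n N r")
  then have B: "B = code_vertex ` ?V" and F: "F = snd (code_graph n N r)"
    by (simp_all add: code_graph_def)
  have edge: "(code_vertex u, code_vertex v) \<in> F \<longleftrightarrow> code_edge r u v" if "u \<in> ?V" "v \<in> ?V" for u v
    unfolding F using that by (rule code_graph_edge_iff)
  show ?thesis
    unfolding BF
  proof (rule K_of_part_function[where \<pi> = "\<lambda>x. fst (prod_decode x)"])
    show "finite B"
      unfolding B by (simp add: finite_imp_finite_nsets)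
    show "F \<subseteq> B \<times> B"
      using BF by (auto simp: code_graph_def B)
    show "(\<lambda>x. fst (prod_decode x)) ` B \<subseteq> {..<n}"
      unfolding B by (auto simp: code_vertex_index)
  next
    fix x y assume "x \<in> B" "y \<in> B"
    then obtain u v where uv: "u \<in> ?V" "v \<in> ?V" "x = code_vertex u" "y = code_vertex v"
      unfolding B by blast
    show "fst (prod_decode x) = fst (prod_decode y) \<Longrightarrow> (x, y) \<notin> F"
      and "fst (prod_decode x) \<noteq> fst (prod_decode y) \<Longrightarrow> (x, y) \<in> F \<longleftrightarrow> (y, x) \<notin> F"
      using edge[OF uv(1,2)] edge[OF uv(2,1)]
      by (auto simp: uv(3,4) code_vertex_index code_edge_def)
  qed
qed

section \<open>Embedding into the code graph\<close>

locale code_embedding =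
  fixes n N m r :: nat
    and A :: "nat set" and E :: "(nat \<times> nat) set" and P :: "nat \<Rightarrow> nat set"
    and R :: "(nat \<times> nat) set"
    and B :: "nat set" and F :: "(nat \<times> nat) set" and Q :: "nat \<Rightarrow> nat set"
    and U :: "(nat \<times> nat) set"
    and H :: "nat set"
  assumes A_star: "Kstar n (A, E, P, R)"
    and B_star: "Kstar n (B, F, Q, U)"
    and B_code: "(B, F) = code_graph n N r"
    and A_below: "A \<subseteq> {..<m}"
    and r_eq: "r = 2 * m * m"
    and H_sub: "H \<subseteq> {..<N}"
    and H_card: "card H = r * (3 * m + 2)"
    and H_homogeneous: "\<And>Z Z' j. Z \<in> nsets H (2 * r) \<Longrightarrow> Z' \<in> nsets H (2 * r) \<Longrightarrow> j < n \<Longrightarrow>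
      (code_vertex (j, alternate_elems 0 Z), code_vertex (j, alternate_elems 1 Z)) \<in> U \<longleftrightarrow>
      (code_vertex (j, alternate_elems 0 Z'), code_vertex (j, alternate_elems 1 Z')) \<in> U"
begin

abbreviation labA :: "nat \<Rightarrow> nat" where "labA \<equiv> part_index n P"
abbreviation labB :: "nat \<Rightarrow> nat" where "labB \<equiv> part_index n Q"
abbreviation vertices :: "(nat \<times> nat set) set" where "vertices \<equiv> {..<n} \<times> nsets {..<N} r"

lemma B_eq: "B = code_vertex ` vertices"
  using B_code by (simp add: code_graph_def)

lemma code_edge_iff:
  assumes "u \<in> vertices" "v \<in> vertices"
  shows "(code_vertex u, code_vertex v) \<in> F \<longleftrightarrow> code_edge r u v"
proof -
  have "F = snd (code_graph n N r)"
    using B_code[symmetric] by simp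
  then show ?thesis
    using code_graph_edge_iff[OF assms] by simp
qed

lemma initial_segment_vertex: "{..<r} \<in> nsets {..<N} r"
proof -
  have "r \<le> card H"
    using H_card by simp
  also have "\<dots> \<le> N"
    using card_mono[OF _ H_sub] by simp
  finally show ?thesis
    by (simp add: nsets_def)
qed

definition part_label :: "nat \<Rightarrow> nat" where
  "part_label j = labB (code_vertex (j, {..<r}))"

lemma labB_code_vertex_eq_iff:
  assumes "u \<in> vertices" "v \<in> vertices"
  shows "labB (code_vertex u) = labB (code_vertex v) \<longleftrightarrow> fst u = fst v"
proof -
  have B: "code_vertex u \<in> B" "code_vertex v \<in> B"
    using assms B_eq by auto
  have "(code_vertex u, code_vertex v) \<in> F \<or> (code_vertex v, code_vertex u) \<in> F \<longleftrightarrow> fst u \<noteq> fst v"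
    using code_edge_iff[OF assms] code_edge_iff[OF assms(2,1)] by (auto simp: code_edge_def)
  then show ?thesis
    using Kstar_no_edge_in_part[OF B_star B] Kstar_no_edge_in_part[OF B_star B(2,1)]
      Kstar_edge_across_parts[OF B_star B] by auto
qed

lemma labB_code_vertex: "j < n \<Longrightarrow> S \<in> nsets {..<N} r \<Longrightarrow> labB (code_vertex (j, S)) = part_label j"
  unfolding part_label_def using labB_code_vertex_eq_iff initial_segment_vertex by simp

lemma part_label_bij: "bij_betw part_label {..<n} {..<n}"
proof -
  have "inj_on part_label {..<n}"
    unfolding part_label_def using labB_code_vertex_eq_iff initial_segment_vertex
    by (auto intro!: inj_onI)
  moreover have "part_label ` {..<n} \<subseteq> {..<n}"
    using part_index_less[OF B_star] initial_segment_vertex B_eq by (auto simp: part_label_def)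
  ultimately show ?thesis
    by (simp add: bij_betw_def endo_inj_surj)
qed

definition part_of :: "nat \<Rightarrow> nat" where
  "part_of = inv_into {..<n} part_label"

lemma part_of_bij: "bij_betw part_of {..<n} {..<n}"
  unfolding part_of_def by (rule bij_betw_inv_into[OF part_label_bij])

lemma part_of_less: "l < n \<Longrightarrow> part_of l < n"
  using bij_betwE[OF part_of_bij] by blast

lemma part_label_part_of: "l < n \<Longrightarrow> part_label (part_of l) = l"
  unfolding part_of_def using bij_betw_inv_into_right[OF part_label_bij] by simp

lemma part_of_eq_iff: "l < n \<Longrightarrow> l' < n \<Longrightarrow> part_of l = part_of l' \<longleftrightarrow> l = l'"
  using inj_onD[OF bij_betw_imp_inj_on[OF part_of_bij]] by blast

definition ascending :: "nat \<Rightarrow> bool" where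
  "ascending j \<longleftrightarrow> (\<exists>Z \<in> nsets H (2 * r).
     (code_vertex (j, alternate_elems 0 Z), code_vertex (j, alternate_elems 1 Z)) \<in> U)"

lemma interleaved_order_iff:
  assumes "Z \<in> nsets H (2 * r)" "j < n"
  shows "(code_vertex (j, alternate_elems 0 Z), code_vertex (j, alternate_elems 1 Z)) \<in> U
    \<longleftrightarrow> ascending j"
  unfolding ascending_def using H_homogeneous[OF assms(1) _ assms(2)] assms(1) by blast

text \<open>Interleaved codes in part \<open>j\<close> are ordered ascending or descending according to
  \<open>ascending j\<close>, so the height ranks each part of \<open>A\<close> along \<open>R\<close> or along its converse.\<close>

definition orient :: "nat \<Rightarrow> (nat \<times> nat) set" where
  "orient l = (if ascending (part_of l) then R else R\<inverse>)"

lemma orient_strict_order: "trans (orient l)" "irrefl (orient l)"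
  using Kstar_order_irrefl[OF A_star] Kstar_order_trans[OF A_star]
  by (auto simp: orient_def trans_def irrefl_def)

lemma orient_total: "x \<in> A \<Longrightarrow> y \<in> A \<Longrightarrow> x \<noteq> y \<Longrightarrow> (x, y) \<in> orient l \<or> (y, x) \<in> orient l"
  using Kstar_order_total[OF A_star] by (auto simp: orient_def)

definition height :: "nat \<Rightarrow> nat" where
  "height z = rank_in {y \<in> A. labA y = labA z} (orient (labA z)) z"

lemma height_less: "z \<in> A \<Longrightarrow> height z < m"
proof -
  assume "z \<in> A"
  then have "height z < card {y \<in> A. labA y = labA z}"
    unfolding height_def using Kstar_finite[OF A_star] orient_strict_order
    by (intro rank_in_less_card) simp_all
  also have "\<dots> \<le> card {..<m}"
    using A_below by (intro card_mono) auto
  finally show ?thesis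
    by simp
qed

lemma height_mono:
  assumes "z \<in> A" "labA z = labA z'" "(z, z') \<in> orient (labA z)"
  shows "height z < height z'"
  unfolding height_def assms(2)[symmetric]
  using Kstar_finite[OF A_star] orient_strict_order assms
  by (intro rank_in_less) simp_all

sublocale keys: part_keys A labA height m
  using A_below height_less by unfold_locales

definition forward_edge :: "nat \<Rightarrow> nat \<Rightarrow> bool" where
  "forward_edge x y \<longleftrightarrow> (x, y) \<in> E \<and> part_of (labA x) < part_of (labA y)"

definition enum :: "nat \<Rightarrow> nat" where
  "enum t = sorted_list_of_set H ! t"

lemma enum_strict_mono: "strict_mono_on {..<r * (3 * m + 2)} enum"
proof -
  have "finite H"
    using H_sub finite_subset by blast
  then show ?thesis
    using H_card strict_sorted_list_of_set[of H]
    by (auto intro!: strict_mono_onI simp: enum_def sorted_wrt_iff_nth_less)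
qed

lemma enum_in_H: "t < r * (3 * m + 2) \<Longrightarrow> enum t \<in> H"
proof -
  assume "t < r * (3 * m + 2)"
  moreover have "finite H"
    using H_sub finite_subset by blast
  ultimately show ?thesis
    using H_card nth_mem[of t "sorted_list_of_set H"] by (simp add: enum_def)
qed

definition code :: "nat \<Rightarrow> nat set" where
  "code z = block_code enum (3 * m + 2) r (\<lambda>c. keys.pair_key forward_edge c z)"

definition emb :: "nat \<Rightarrow> nat" where
  "emb z = code_vertex (part_of (labA z), code z)"

lemma key_less: "z \<in> A \<Longrightarrow> \<forall>c<r. keys.pair_key forward_edge c z < 3 * m + 2"
  using keys.pair_key_less by blast

lemma code_in_H: "z \<in> A \<Longrightarrow> code z \<in> nsets H r"
  using block_code_subset[OF enum_strict_mono key_less]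
    card_block_code[OF enum_strict_mono key_less]
    enum_in_H H_sub finite_subset
  unfolding code_def nsets_def by blast

lemma emb_vertex: "z \<in> A \<Longrightarrow> (part_of (labA z), code z) \<in> vertices"
  using part_of_less part_index_less[OF A_star] code_in_H H_sub nsets_mono by blast

lemma emb_in_B: "z \<in> A \<Longrightarrow> emb z \<in> B"
  using emb_vertex B_eq by (simp add: emb_def)

lemma labB_emb: "z \<in> A \<Longrightarrow> labB (emb z) = labA z"
  using emb_vertex labB_code_vertex part_label_part_of part_index_less[OF A_star]
  by (simp add: emb_def)

lemma emb_interleaved:
  assumes "u \<in> A" "v \<in> A" "labA u = labA v" "height u < height v"
  shows "(emb u, emb v) \<in> U \<longleftrightarrow> ascending (part_of (labA u))"
proof -
  have "\<forall>c<r. keys.pair_key forward_edge c u < keys.pair_key forward_edge c v"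
    using keys.pair_key_mono assms by blast
  then obtain Z where Z: "Z \<subseteq> enum ` {..<r * (3 * m + 2)}" "card Z = 2 * r"
    "alternate_elems 0 Z = code u" "alternate_elems 1 Z = code v"
    unfolding code_def by (rule block_codes_interleave[OF enum_strict_mono _ key_less[OF assms(2)]])
  have "Z \<subseteq> H"
    using Z(1) enum_in_H by auto
  moreover have "finite Z"
    using Z(1) finite_surj by blast
  ultimately have "Z \<in> nsets H (2 * r)"
    using Z(2) by (simp add: nsets_def)
  moreover have "part_of (labA u) < n"
    using part_of_less part_index_less[OF A_star assms(1)] .
  ultimately have
    "(code_vertex (part_of (labA u), code u), code_vertex (part_of (labA u), code v)) \<in> U
      \<longleftrightarrow> ascending (part_of (labA u))"
    by (rule interleaved_order_iff[of Z, unfolded Z(3,4)])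
  then show ?thesis
    using assms(3) by (simp add: emb_def)
qed

lemma discordant_code:
  assumes "u \<in> A" "v \<in> A"
  shows "discordant r (code u) (code v) \<longleftrightarrow> labA u \<noteq> labA v \<and> (forward_edge u v \<or> forward_edge v u)"
  unfolding code_def
    discordant_block_code[OF enum_strict_mono key_less[OF assms(1)] key_less[OF assms(2)]]
  using keys.pair_key_discordant[OF assms] by (simp add: r_eq)

lemma emb_edge_iff:
  assumes "u \<in> A" "v \<in> A"
  shows "(u, v) \<in> E \<longleftrightarrow> (emb u, emb v) \<in> F"
proof (cases "labA u = labA v")
  case True
  then show ?thesis
    using Kstar_no_edge_in_part[OF A_star assms]
      code_edge_iff[OF emb_vertex[OF assms(1)] emb_vertex[OF assms(2)]]
    by (simp add: emb_def code_edge_def)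
next
  case False
  then have "part_of (labA u) \<noteq> part_of (labA v)"
    using part_of_eq_iff part_index_less[OF A_star] assms by blast
  then show ?thesis
    using Kstar_edge_across_parts[OF A_star assms] False
      discordant_code[OF assms] discordant_code[OF assms(2,1)]
      code_edge_iff[OF emb_vertex[OF assms(1)] emb_vertex[OF assms(2)]]
    by (auto simp: emb_def code_edge_def forward_edge_def)
qed

lemma code_neq:
  assumes "u \<in> A" "v \<in> A" "labA u = labA v" "height u < height v"
  shows "code u \<noteq> code v"
proof -
  have "0 < r"
    using A_below assms(1) by (auto simp: r_eq)
  then have nth: "sorted_list_of_set (code w) ! 0 = enum (keys.pair_key forward_edge 0 w)"
    if "w \<in> A" for w
    using sorted_block_code[OF enum_strict_mono key_less[OF that]] by (simp add: code_def)
  moreover have "keys.pair_key forward_edge 0 u < keys.pair_key forward_edge 0 v"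
    using keys.pair_key_mono assms by blast
  moreover have "0 * (3 * m + 2) + keys.pair_key forward_edge 0 v < r * (3 * m + 2)"
    using key_less[OF assms(2)] \<open>0 < r\<close> by (intro block_index_bound) simp_all
  ultimately have "enum (keys.pair_key forward_edge 0 u) < enum (keys.pair_key forward_edge 0 v)"
    using strict_mono_onD[OF enum_strict_mono] by simp
  then show ?thesis
    using nth[OF assms(1)] nth[OF assms(2)] by auto
qed

lemma emb_inj: "inj_on emb A"
proof (rule inj_onI, rule ccontr)
  fix u v assume uv: "u \<in> A" "v \<in> A" "emb u = emb v" "u \<noteq> v"
  have "finite (code w)" if "w \<in> A" for w
    using code_in_H[OF that] by (simp add: nsets_def)
  then have eq: "part_of (labA u) = part_of (labA v)" "code u = code v"
    using uv(3) code_vertex_eq_iff uv(1,2) by (auto simp: emb_def)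
  then have "labA u = labA v"
    using part_of_eq_iff part_index_less[OF A_star] uv(1,2) by blast
  moreover have "height u < height v \<or> height v < height u"
    using orient_total[OF uv(1,2,4), of "labA u"] height_mono[OF uv(1)] height_mono[OF uv(2)]
      calculation by auto
  ultimately show False
    using code_neq[OF uv(1,2)] code_neq[OF uv(2,1)] eq(2) by auto
qed

lemma emb_order_oriented:
  assumes "u \<in> A" "v \<in> A" "labA u = labA v" "(u, v) \<in> orient (labA u)"
  shows "((u, v) \<in> R \<longleftrightarrow> (emb u, emb v) \<in> U) \<and> ((v, u) \<in> R \<longleftrightarrow> (emb v, emb u) \<in> U)"
proof -
  have U: "(emb u, emb v) \<in> U \<longleftrightarrow> ascending (part_of (labA u))"
    using emb_interleaved height_mono assms by blast
  have "u \<noteq> v"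
    using assms(4) orient_strict_order(2) by (auto simp: irrefl_def)
  then have "emb u \<noteq> emb v"
    using emb_inj assms(1,2) by (auto dest: inj_onD)
  then have "(emb u, emb v) \<in> U \<longleftrightarrow> (emb v, emb u) \<notin> U"
    using Kstar_order_total[OF B_star emb_in_B[OF assms(1)] emb_in_B[OF assms(2)]]
      Kstar_order_irrefl[OF B_star] Kstar_order_trans[OF B_star] by blast
  moreover have "(u, v) \<in> R \<longleftrightarrow> (v, u) \<notin> R"
    using Kstar_order_total[OF A_star assms(1,2) \<open>u \<noteq> v\<close>]
      Kstar_order_irrefl[OF A_star] Kstar_order_trans[OF A_star] by blast
  ultimately show ?thesis
    using U assms(4) by (auto simp: orient_def split: if_splits)
qed

lemma emb_order_iff:
  assumes "u \<in> A" "v \<in> A"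
  shows "(u, v) \<in> R \<longleftrightarrow> (emb u, emb v) \<in> U"
proof (cases "labA u = labA v")
  case True
  show ?thesis
  proof (cases "u = v")
    case True
    then show ?thesis
      using Kstar_order_irrefl[OF A_star] Kstar_order_irrefl[OF B_star] by simp
  next
    case False
    then consider "(u, v) \<in> orient (labA u)" | "(v, u) \<in> orient (labA v)"
      using orient_total[OF assms False] \<open>labA u = labA v\<close> by auto
    then show ?thesis
    proof cases
      case 1
      then show ?thesis
        using emb_order_oriented[OF assms \<open>labA u = labA v\<close>] by blast
    next
      case 2
      then show ?thesis
        using emb_order_oriented[OF assms(2,1) \<open>labA u = labA v\<close>[symmetric]] by blast
    qed
  qed
next
  case False
  then show ?thesis
    using Kstar_order_across_parts[OF A_star assms False]
      Kstar_order_across_parts[OF B_star emb_in_B[OF assms(1)] emb_in_B[OF assms(2)]]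
    by (simp add: labB_emb assms)
qed

lemma emb_mem_iff: "z \<in> A \<Longrightarrow> i < n \<Longrightarrow> z \<in> P i \<longleftrightarrow> emb z \<in> Q i"
  using mem_part_iff[OF A_star] mem_part_iff[OF B_star emb_in_B] labB_emb by simp

lemma embeds: "embeds n (A, E, P, R) (B, F, Q, U)"
  unfolding embeds_def prod.case
  using emb_inj emb_in_B emb_edge_iff emb_order_iff emb_mem_iff by (intro exI[of _ emb]) blast

end

section \<open>The expansion property\<close>

lemma ramsey_homogeneous_predicates:
  fixes b :: "nat \<Rightarrow> nat set \<Rightarrow> bool"
  assumes "partn_lst {..<N} (replicate (2 ^ n) M) s"
  obtains H where "H \<subseteq> {..<N}" "card H = M"
    "\<And>Z Z' j. Z \<in> nsets H s \<Longrightarrow> Z' \<in> nsets H s \<Longrightarrow> j < n \<Longrightarrow> b j Z \<longleftrightarrow> b j Z'"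
proof -
  obtain g where g: "bij_betw g (Pow {..<n}) {0..<card (Pow {..<n :: nat})}"
    using ex_bij_betw_finite_nat[of "Pow {..<n :: nat}"] by auto
  define colour where "colour Z = g {j. j < n \<and> b j Z}" for Z
  have "colour \<in> nsets {..<N} s \<rightarrow> {..<length (replicate (2 ^ n) M)}"
    using bij_betwE[OF g] by (auto simp: colour_def card_Pow)
  then obtain i H where "i < length (replicate (2 ^ n) M)"
    and H: "H \<in> nsets {..<N} (replicate (2 ^ n) M ! i)" and mono: "colour ` nsets H s \<subseteq> {i}"
    by (rule partn_lstE[OF assms _ refl])
  show thesis
  proof
    show "H \<subseteq> {..<N}" "card H = M"
      using H \<open>i < _\<close> by (auto simp: nsets_def)
    fix Z Z' j assume Z: "Z \<in> nsets H s" "Z' \<in> nsets H s" and "j < n"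
    have "colour Z = colour Z'"
      using mono Z by blast
    then have "{j. j < n \<and> b j Z} = {j. j < n \<and> b j Z'}"
      unfolding colour_def by (rule bij_betw_imp_inj_on[OF g, THEN inj_onD]) auto
    then show "b j Z \<longleftrightarrow> b j Z'"
      using \<open>j < n\<close> by blast
  qed
qed

definition ramsey_bound :: "nat \<Rightarrow> nat \<Rightarrow> nat \<Rightarrow> nat" where
  "ramsey_bound c M s = (LEAST N. partn_lst {..<N} (replicate c M) s)"

lemma partn_lst_ramsey_bound: "partn_lst {..<ramsey_bound c M s} (replicate c M) s"
  unfolding ramsey_bound_def using ramsey_full by (rule LeastI_ex)

lemma embeds_into_code_graph:
  assumes "Kstar n (A, E, P, R)" "Kstar n (B, F, Q, U)" "(B, F) = code_graph n N r"
    and "A \<subseteq> {..<m}" "r = 2 * m * m"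
    and "partn_lst {..<N} (replicate (2 ^ n) (r * (3 * m + 2))) (2 * r)"
  shows "embeds n (A, E, P, R) (B, F, Q, U)"
proof -
  obtain H where "H \<subseteq> {..<N}" "card H = r * (3 * m + 2)"
    "\<And>Z Z' j. Z \<in> nsets H (2 * r) \<Longrightarrow> Z' \<in> nsets H (2 * r) \<Longrightarrow> j < n \<Longrightarrow>
      (code_vertex (j, alternate_elems 0 Z), code_vertex (j, alternate_elems 1 Z)) \<in> U \<longleftrightarrow>
      (code_vertex (j, alternate_elems 0 Z'), code_vertex (j, alternate_elems 1 Z')) \<in> U"
    by (rule ramsey_homogeneous_predicates[OF assms(6), where b = "\<lambda>j Z.
      (code_vertex (j, alternate_elems 0 Z), code_vertex (j, alternate_elems 1 Z)) \<in> U"]) blast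
  then interpret code_embedding n N m r A E P R B F Q U H
    using assms(1-5) by unfold_locales
  show ?thesis
    by (rule embeds)
qed

definition expansion_witness :: "nat \<Rightarrow> nat set \<Rightarrow> dg" where
  "expansion_witness n A =
    (let m = Suc (Max (insert 0 A)); r = 2 * m * m
     in code_graph n (ramsey_bound (2 ^ n) (r * (3 * m + 2)) (2 * r)) r)"

lemma K_expansion_witness: "K n (expansion_witness n A)"
  by (simp add: expansion_witness_def Let_def code_graph_K)

lemma embeds_into_expansion_witness:
  assumes "Kstar n (A, E, P, R)" "Kstar n (B, F, Q, U)" "(B, F) = expansion_witness n A"
  shows "embeds n (A, E, P, R) (B, F, Q, U)"
proof -
  define m where "m = Suc (Max (insert 0 A))"
  define r where "r = 2 * m * m"
  have "A \<subseteq> {..<m}"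
    using Kstar_finite[OF assms(1)] by (auto simp: m_def less_Suc_eq_le)
  moreover have "(B, F) = code_graph n (ramsey_bound (2 ^ n) (r * (3 * m + 2)) (2 * r)) r"
    using assms(3) unfolding expansion_witness_def Let_def m_def r_def .
  ultimately show ?thesis
    using embeds_into_code_graph[OF assms(1,2)] r_def partn_lst_ramsey_bound by blast
qed

theorem theorem8p6:
  fixes n :: nat
  assumes "n \<ge> 1"
  shows "expansion_property (K n) (Kstar n) reduct (embeds n)"
  unfolding expansion_property_def
proof (intro allI impI)
  fix G assume "K n G"
  obtain A E0 where G: "G = (A, E0)"
    by fastforce
  show "\<exists>B. K n B \<and> (\<forall>As Bs. Kstar n As \<longrightarrow> Kstar n Bs \<longrightarrow> reduct As = G \<longrightarrow> reduct Bs = B \<longrightarrow>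
    embeds n As Bs)"
  proof (intro exI conjI allI impI)
    show "K n (expansion_witness n A)"
      by (rule K_expansion_witness)
    fix As Bs assume "Kstar n As" "Kstar n Bs" "reduct As = G" "reduct Bs = expansion_witness n A"
    moreover obtain A' E P R B F Q U where "As = (A', E, P, R)" "Bs = (B, F, Q, U)"
      by (cases As, cases Bs)
    ultimately show "embeds n As Bs"
      using embeds_into_expansion_witness by (simp add: reduct_def G)
  qed
qed

end
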